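(* In the setting described in the context, the quantum dimension \[ \dim_1:=(\ ,\ )_1(g_1) \] satisfies, modulo $\lambda^2$, \[ \dim_1=n+\frac{\lambda}{2}\{g_{\mu\nu},g^{\mu\nu}\}=n+\frac{\lambda}{2}\,\omega^{\alpha\beta}g_{\mu\nu,\alpha}\,g^{\mu\nu}{}_{,\beta}, \] where $n=\dim M$.
   Context: Let $M$ be a smooth $n$-manifold with local coordinates $x^\mu$. Commas denote partial derivatives ($f_{,\alpha}=\partial_\alpha f$) and repeated indices are summed. $g_{\mu\nu}$ is a (pseudo-)Riemannian metric with inverse $g^{\mu\nu}$, which is used to raise and lower indices. $\widehat\Gamma^\alpha{}_{\beta\gamma}$ are its Levi-Civita Christoffel symbols and $\widehat\nabla$ is its Levi-Civita connection. $\nabla$ is a further linear connection with Christoffel symbols $\Gamma^\alpha{}_{\beta\gamma}$, in the convention $\nabla_\beta dx^\alpha=-\Gamma^\alpha{}_{\beta\gamma}dx^\gamma$. Thus $\nabla_\beta\eta_\alpha=\partial_\beta\eta_\alpha-\eta_\gamma\Gamma^\gamma{}_{\beta\alpha}$ and $\nabla_\beta V^\alpha=\partial_\beta V^\alpha+\Gamma^\alpha{}_{\beta\gamma}V^\gamma$, extended to all tensors in the usual way; a semicolon also denotes $\nabla$. The associated tensors are: - torsion $T^\alpha{}_{\beta\gamma}=\Gamma^\alpha{}_{\beta\gamma}-\Gamma^\alpha{}_{\gamma\beta}$; - curvature $R^\alpha{}_{\beta\gamma\delta}=\Gamma^\alpha{}_{\delta\beta,\gamma}-\Gamma^\alpha{}_{\gamma\beta,\delta}+\Gamma^\kappa{}_{\delta\beta}\Gamma^\alpha{}_{\gamma\kappa}-\Gamma^\kappa{}_{\gamma\beta}\Gamma^\alpha{}_{\delta\kappa}$;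 - contorsion $S^\alpha{}_{\beta\gamma}=\Gamma^\alpha{}_{\beta\gamma}-\widehat\Gamma^\alpha{}_{\beta\gamma}$; - lowered symbols $\Gamma_{\mu\beta\nu}=g_{\mu\kappa}\Gamma^\kappa{}_{\beta\nu}$. Standing assumptions: - $\nabla$ is metric compatible, $\nabla g=0$, equivalently $g_{\mu\nu,\beta}=\Gamma_{\mu\beta\nu}+\Gamma_{\nu\beta\mu}$. - $\omega^{\alpha\beta}=-\omega^{\beta\alpha}$ is a Poisson bivector (it satisfies the Jacobi identity), with $\{f,h\}=\omega^{\alpha\beta}f_{,\alpha}h_{,\beta}$. - $\nabla$ is Poisson-compatible: $\nabla_\gamma\omega^{\alpha\beta}+T^\alpha{}_{\delta\gamma}\omega^{\delta\beta}+T^\beta{}_{\delta\gamma}\omega^{\alpha\delta}=0$. $\lambda$ is a formal parameter and all identities are taken modulo $\lambda^2$. The quantised products, for functions $f,h$ and 1-forms $\eta$, are - $f\bullet h=fh+\frac\lambda2\{f,h\}$; - $f\bullet\eta=f\eta+\frac\lambda2\omega^{\alpha\beta}f_{,\alpha}\nabla_\beta\eta$; - $\eta\bullet f=\eta f-\frac\lambda2\omega^{\alpha\beta}f_{,\alpha}\nabla_\beta\eta$. Commutators are $[f,\eta]=f\bullet\eta-\eta\bullet f$. Quantum metric data: - $\otimes_1$ is the tensor product of 1-forms over the quantised function algebra, i.e. it satisfies $\eta\bullet f\otimes_1\zeta=\eta\otimes_1 f\bullet\zeta$. - $\mathcal R_{\mu\nu}=\frac12 g_{\alpha\beta}\omega^{\alpha\gamma}(\nabla_\gamma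 T^\beta{}_{\mu\nu}-R^\beta{}_{\mu\nu\gamma}+R^\beta{}_{\nu\mu\gamma})$. - $h_{\mu\nu}=\mathcal R_{\mu\nu}+\omega^{\alpha\beta}(\Gamma_{\mu\alpha\kappa}\Gamma^\kappa{}_{\beta\nu}+\Gamma^\gamma{}_{\alpha\mu}g_{\gamma\nu,\beta})$, which is antisymmetric. - $\tilde g_{\mu\nu}=g_{\mu\nu}+\frac\lambda2h_{\mu\nu}$, and the quantum metric is $g_1=dx^\mu\bullet\tilde g_{\mu\nu}\otimes_1dx^\nu$. - $\tilde g^{\mu\nu}$ is the $\bullet$-inverse matrix: $\tilde g_{\mu\nu}\bullet\tilde g^{\nu\gamma}=\delta_\mu^\gamma=\tilde g^{\gamma\nu}\bullet\tilde g_{\nu\mu}$. - $(\ ,\ )_1:\Omega^1\otimes_1\Omega^1\to C^\infty(M)$ is the bimodule map with $(dx^\mu,dx^\nu)_1=\tilde g^{\mu\nu}$ and $(f\bullet\eta,\zeta\bullet k)_1=f\bullet(\eta,\zeta)_1\bullet k$. *)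

theory Defs
  imports "HOL-Analysis.Analysis"
begin

text \<open>Everything is done in a single coordinate chart: an open set U in R^n,
 with the coordinate index type 'n (n = CARD('n)).  The formal parameter lambda is
 handled by working in C^infty[lambda]/(lambda^2): an element a0 + lambda a1
 is represented by the pair (a0, a1).  A 1-form is given by its coefficient
 functions eta_alpha (with eta = eta_alpha dx^alpha).\<close>

type_synonym 'n fn = "real^'n \<Rightarrow> real"
type_synonym 'n qf = "'n fn \<times> 'n fn"
type_synonym 'n form = "'n \<Rightarrow> 'n qf"

definition pd :: "'n::finite \<Rightarrow> 'n fn \<Rightarrow> 'n fn" where
  "pd i f x = frechet_derivative f (at x) (axis i 1)"

definition Cinf_on :: "(real^'n::finite) set \<Rightarrow> 'n fn \<Rightarrow> bool" where
  "Cinf_on U f \<longleftrightarrow> (\<forall>is::'n list. \<forall>x\<in>U. (foldr pd is f) differentiable (at x))"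

definition qsmooth :: "(real^'n::finite) set \<Rightarrow> 'n qf \<Rightarrow> bool" where
  "qsmooth U a \<longleftrightarrow> Cinf_on U (fst a) \<and> Cinf_on U (snd a)"

definition fsmooth :: "(real^'n::finite) set \<Rightarrow> 'n form \<Rightarrow> bool" where
  "fsmooth U \<eta> \<longleftrightarrow> (\<forall>\<alpha>. qsmooth U (\<eta> \<alpha>))"

definition qeqU :: "(real^'n::finite) set \<Rightarrow> 'n qf \<Rightarrow> 'n qf \<Rightarrow> bool" where
  "qeqU U a b \<longleftrightarrow> (\<forall>x\<in>U. fst a x = fst b x \<and> snd a x = snd b x)"

definition qadd :: "'n qf \<Rightarrow> 'n qf \<Rightarrow> 'n qf" where
  "qadd a b = ((\<lambda>x. fst a x + fst b x), (\<lambda>x. snd a x + snd b x))"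

definition qsum :: "('i \<Rightarrow> 'n qf) \<Rightarrow> 'i set \<Rightarrow> 'n qf" where
  "qsum F S = ((\<lambda>x. \<Sum>i\<in>S. fst (F i) x), (\<lambda>x. \<Sum>i\<in>S. snd (F i) x))"

definition fadd :: "'n form \<Rightarrow> 'n form \<Rightarrow> 'n form" where
  "fadd \<eta> \<zeta> = (\<lambda>\<alpha>. qadd (\<eta> \<alpha>) (\<zeta> \<alpha>))"

definition pbr :: "('n::finite \<Rightarrow> 'n \<Rightarrow> 'n fn) \<Rightarrow> 'n fn \<Rightarrow> 'n fn \<Rightarrow> 'n fn" where
  "pbr \<omega> f h x = (\<Sum>\<alpha>\<in>UNIV. \<Sum>\<beta>\<in>UNIV. \<omega> \<alpha> \<beta> x * pd \<alpha> f x * pd \<beta> h x)"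

text \<open>Quantised product of functions, f . h = fh + lambda/2 {f,h}  (mod lambda^2).\<close>
definition qmult :: "('n::finite \<Rightarrow> 'n \<Rightarrow> 'n fn) \<Rightarrow> 'n qf \<Rightarrow> 'n qf \<Rightarrow> 'n qf" where
  "qmult \<omega> a b =
     ((\<lambda>x. fst a x * fst b x),
      (\<lambda>x. fst a x * snd b x + snd a x * fst b x + 1/2 * pbr \<omega> (fst a) (fst b) x))"

definition cov1 :: "('n::finite \<Rightarrow> 'n \<Rightarrow> 'n \<Rightarrow> 'n fn) \<Rightarrow> 'n \<Rightarrow> ('n \<Rightarrow> 'n fn) \<Rightarrow> 'n \<Rightarrow> 'n fn" where
  "cov1 \<Gamma> \<beta> \<eta> \<gamma> x = pd \<beta> (\<eta> \<gamma>) x - (\<Sum>\<delta>\<in>UNIV. \<eta> \<delta> x * \<Gamma> \<delta> \<beta> \<gamma> x)"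

text \<open>f . eta = f eta + lambda/2 omega^{ab} f_{,a} nabla_b eta.\<close>
definition qlmult :: "('n::finite \<Rightarrow> 'n \<Rightarrow> 'n fn) \<Rightarrow> ('n \<Rightarrow> 'n \<Rightarrow> 'n \<Rightarrow> 'n fn)
    \<Rightarrow> 'n qf \<Rightarrow> 'n form \<Rightarrow> 'n form" where
  "qlmult \<omega> \<Gamma> f \<eta> = (\<lambda>\<gamma>.
     ((\<lambda>x. fst f x * fst (\<eta> \<gamma>) x),
      (\<lambda>x. fst f x * snd (\<eta> \<gamma>) x + snd f x * fst (\<eta> \<gamma>) x
         + 1/2 * (\<Sum>\<alpha>\<in>UNIV. \<Sum>\<beta>\<in>UNIV. \<omega> \<alpha> \<beta> x * pd \<alpha> (fst f) x
                     * cov1 \<Gamma> \<beta> (\<lambda>\<delta>. fst (\<eta> \<delta>)) \<gamma> x))))"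

text \<open>eta . f = eta f - lambda/2 omega^{ab} f_{,a} nabla_b eta.\<close>
definition qrmult :: "('n::finite \<Rightarrow> 'n \<Rightarrow> 'n fn) \<Rightarrow> ('n \<Rightarrow> 'n \<Rightarrow> 'n \<Rightarrow> 'n fn)
    \<Rightarrow> 'n form \<Rightarrow> 'n qf \<Rightarrow> 'n form" where
  "qrmult \<omega> \<Gamma> \<eta> f = (\<lambda>\<gamma>.
     ((\<lambda>x. fst f x * fst (\<eta> \<gamma>) x),
      (\<lambda>x. fst f x * snd (\<eta> \<gamma>) x + snd f x * fst (\<eta> \<gamma>) x
         - 1/2 * (\<Sum>\<alpha>\<in>UNIV. \<Sum>\<beta>\<in>UNIV. \<omega> \<alpha> \<beta> x * pd \<alpha> (fst f) x
                     * cov1 \<Gamma> \<beta> (\<lambda>\<delta>. fst (\<eta> \<delta>)) \<gamma> x))))"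

definition dx :: "'n \<Rightarrow> 'n form" where
  "dx \<mu> = (\<lambda>\<alpha>. if \<alpha> = \<mu> then ((\<lambda>x. 1), (\<lambda>x. 0)) else ((\<lambda>x. 0), (\<lambda>x. 0)))"

definition torsion :: "('n \<Rightarrow> 'n \<Rightarrow> 'n \<Rightarrow> 'n fn) \<Rightarrow> 'n \<Rightarrow> 'n \<Rightarrow> 'n \<Rightarrow> 'n fn" where
  "torsion \<Gamma> a b c x = \<Gamma> a b c x - \<Gamma> a c b x"

definition curv :: "('n::finite \<Rightarrow> 'n \<Rightarrow> 'n \<Rightarrow> 'n fn) \<Rightarrow> 'n \<Rightarrow> 'n \<Rightarrow> 'n \<Rightarrow> 'n \<Rightarrow> 'n fn" where
  "curv \<Gamma> a b c d x = pd c (\<Gamma> a d b) x - pd d (\<Gamma> a c b) x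
     + (\<Sum>\<kappa>\<in>UNIV. \<Gamma> \<kappa> d b x * \<Gamma> a c \<kappa> x - \<Gamma> \<kappa> c b x * \<Gamma> a d \<kappa> x)"

definition Glow :: "('n::finite \<Rightarrow> 'n \<Rightarrow> 'n fn) \<Rightarrow> ('n \<Rightarrow> 'n \<Rightarrow> 'n \<Rightarrow> 'n fn) \<Rightarrow> 'n \<Rightarrow> 'n \<Rightarrow> 'n \<Rightarrow> 'n fn" where
  "Glow g \<Gamma> m b n x = (\<Sum>k\<in>UNIV. g m k x * \<Gamma> k b n x)"

definition covT :: "('n::finite \<Rightarrow> 'n \<Rightarrow> 'n \<Rightarrow> 'n fn) \<Rightarrow> 'n \<Rightarrow> 'n \<Rightarrow> 'n \<Rightarrow> 'n \<Rightarrow> 'n fn" where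
  "covT \<Gamma> c b m n x = pd c (torsion \<Gamma> b m n) x
     + (\<Sum>\<kappa>\<in>UNIV. \<Gamma> b c \<kappa> x * torsion \<Gamma> \<kappa> m n x)
     - (\<Sum>\<kappa>\<in>UNIV. \<Gamma> \<kappa> c m x * torsion \<Gamma> b \<kappa> n x)
     - (\<Sum>\<kappa>\<in>UNIV. \<Gamma> \<kappa> c n x * torsion \<Gamma> b m \<kappa> x)"

definition Rq :: "('n::finite \<Rightarrow> 'n \<Rightarrow> 'n fn) \<Rightarrow> ('n \<Rightarrow> 'n \<Rightarrow> 'n fn) \<Rightarrow> ('n \<Rightarrow> 'n \<Rightarrow> 'n \<Rightarrow> 'n fn)
    \<Rightarrow> 'n \<Rightarrow> 'n \<Rightarrow> 'n fn" where
  "Rq g \<omega> \<Gamma> \<mu> \<nu> x = 1/2 * (\<Sum>\<alpha>\<in>UNIV. \<Sum>\<beta>\<in>UNIV. \<Sum>\<gamma>\<in>UNIV.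
      g \<alpha> \<beta> x * \<omega> \<alpha> \<gamma> x *
      (covT \<Gamma> \<gamma> \<beta> \<mu> \<nu> x - curv \<Gamma> \<beta> \<mu> \<nu> \<gamma> x + curv \<Gamma> \<beta> \<nu> \<mu> \<gamma> x))"

definition hq :: "('n::finite \<Rightarrow> 'n \<Rightarrow> 'n fn) \<Rightarrow> ('n \<Rightarrow> 'n \<Rightarrow> 'n fn) \<Rightarrow> ('n \<Rightarrow> 'n \<Rightarrow> 'n \<Rightarrow> 'n fn)
    \<Rightarrow> 'n \<Rightarrow> 'n \<Rightarrow> 'n fn" where
  "hq g \<omega> \<Gamma> \<mu> \<nu> x = Rq g \<omega> \<Gamma> \<mu> \<nu> x
     + (\<Sum>\<alpha>\<in>UNIV. \<Sum>\<beta>\<in>UNIV. \<omega> \<alpha> \<beta> x *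
         ((\<Sum>\<kappa>\<in>UNIV. Glow g \<Gamma> \<mu> \<alpha> \<kappa> x * \<Gamma> \<kappa> \<beta> \<nu> x)
          + (\<Sum>\<gamma>\<in>UNIV. \<Gamma> \<gamma> \<alpha> \<mu> x * pd \<beta> (g \<gamma> \<nu>) x)))"

definition gt :: "('n::finite \<Rightarrow> 'n \<Rightarrow> 'n fn) \<Rightarrow> ('n \<Rightarrow> 'n \<Rightarrow> 'n fn) \<Rightarrow> ('n \<Rightarrow> 'n \<Rightarrow> 'n \<Rightarrow> 'n fn)
    \<Rightarrow> 'n \<Rightarrow> 'n \<Rightarrow> 'n qf" where
  "gt g \<omega> \<Gamma> \<mu> \<nu> = (g \<mu> \<nu>, (\<lambda>x. 1/2 * hq g \<omega> \<Gamma> \<mu> \<nu> x))"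

end

theory Submission
  imports Defs
begin

text \<open>
  Write dx^mu * g~_{mu nu} as a left combination sum_gamma c_gamma * dx^gamma of the coordinate forms:
  besides g~_{mu nu} itself, c_gamma carries the order-lambda correction
  omega^{alpha beta} g_{mu nu,alpha} Gamma^mu_{beta gamma}, which comes from
  nabla_beta dx^mu = - Gamma^mu_{beta gamma} dx^gamma. The bimodule property of ( , )_1 turns dim_1
  into sum c_gamma * g~^{gamma nu}. The part g~_{mu nu} * g~^{mu nu} is the trace of
  g~ * g~^{-1} = 1, i.e. n, since the leading terms g and g^{-1} are symmetric. The remaining
  order-lambda term, and the bracket omega^{alpha beta} g_{mu nu,alpha} g^{mu nu}_{,beta} on the
  right-hand side, are omega^{alpha beta} contracted with multiples of
  tr(g^{-1} d_alpha g g^{-1} d_beta g) (metric compatibility expresses dg through Gamma). This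
  trace is symmetric in alpha, beta, so both vanish and both sides equal n.
\<close>

section \<open>Partial derivatives and smooth functions\<close>

lemma pd_cong:
  assumes "open U" "x \<in> U" "\<And>y. y \<in> U \<Longrightarrow> f y = h y"
  shows "pd i f x = pd i h x"
proof -
  have "(f has_derivative D) (at x) \<longleftrightarrow> (h has_derivative D) (at x)" for D
    using has_derivative_transform_within_open[OF _ assms(1,2)] assms(3) by (metis UNIV_I)
  then show ?thesis
    unfolding pd_def frechet_derivative_def by simp
qed

lemma pd_const [simp]: "pd i (\<lambda>x. c) x = 0"
  by (simp add: pd_def)

lemma pd_if_zero [simp]: "pd i (\<lambda>x. if P then f x else 0) x = (if P then pd i f x else 0)"
  by (cases P) simp_all

lemma pd_add:
  assumes "f differentiable at x" "h differentiable at x"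
  shows "pd i (\<lambda>y. f y + h y) x = pd i f x + pd i h x"
  using frechet_derivative_at[OF has_derivative_add[OF assms[unfolded frechet_derivative_works]], symmetric]
  by (simp add: pd_def)

lemma pd_mult:
  assumes "f differentiable at x" "h differentiable at x"
  shows "pd i (\<lambda>y. f y * h y) x = pd i f x * h x + f x * pd i h x"
  using frechet_derivative_at[OF has_derivative_mult[OF assms[unfolded frechet_derivative_works]], symmetric]
  by (simp add: pd_def)

lemma pd_sum:
  assumes "finite S" "\<And>i. i \<in> S \<Longrightarrow> F i differentiable at x"
  shows "pd j (\<lambda>y. \<Sum>i\<in>S. F i y) x = (\<Sum>i\<in>S. pd j (F i) x)"
  using assms
proof (induction S rule: finite_induct)
  case (insert a S)
  then show ?case
    by (simp add: pd_add differentiable_sum)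
qed simp

text \<open>Smoothness is characterised through the classes \<open>Ck\<close>, whose recursion on the order
  makes closure under sums and products provable by induction.\<close>

fun Ck :: "(real^'n::finite) set \<Rightarrow> nat \<Rightarrow> 'n fn \<Rightarrow> bool" where
  "Ck U 0 f \<longleftrightarrow> (\<forall>x\<in>U. f differentiable at x)"
| "Ck U (Suc k) f \<longleftrightarrow> (\<forall>x\<in>U. f differentiable at x) \<and> (\<forall>j. Ck U k (pd j f))"

lemma Ck_differentiable: "Ck U k f \<Longrightarrow> x \<in> U \<Longrightarrow> f differentiable at x"
  by (cases k) simp_all

lemma Ck_Suc_Ck: "Ck U (Suc k) f \<Longrightarrow> Ck U k f"
  by (induction k arbitrary: f) simp_all

lemma Cinf_on_pd:
  assumes "Cinf_on U f"
  shows "Cinf_on U (pd j f)"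
proof -
  have "foldr pd is (pd j f) = foldr pd (is @ [j]) f" for "is"
    by simp
  with assms show ?thesis
    unfolding Cinf_on_def by metis
qed

lemma Cinf_on_differentiable: "Cinf_on U f \<Longrightarrow> x \<in> U \<Longrightarrow> f differentiable at x"
  unfolding Cinf_on_def by (metis foldr.simps(1) id_apply)

lemma Cinf_on_iff_Ck: "Cinf_on U f \<longleftrightarrow> (\<forall>k. Ck U k f)"
proof
  show "\<forall>k. Ck U k f" if "Cinf_on U f"
  proof
    fix k show "Ck U k f"
      using that by (induction k arbitrary: f) (simp_all add: Cinf_on_differentiable Cinf_on_pd)
  qed
next
  assume "\<forall>k. Ck U k f"
  moreover have "\<forall>f. (\<forall>k. Ck U k f) \<longrightarrow> (\<forall>x\<in>U. foldr pd is f differentiable at x)" for "is"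
  proof (induction "is" rule: rev_induct)
    case Nil
    then show ?case using Ck_differentiable by fastforce
  next
    case (snoc j js)
    have "\<forall>k. Ck U k (pd j f)" if "\<forall>k. Ck U k f" for f
      using that Ck.simps(2) by blast
    with snoc show ?case by simp
  qed
  ultimately show "Cinf_on U f"
    by (simp add: Cinf_on_def)
qed

lemma differentiable_at_cong_open:
  assumes "open U" "x \<in> U" "\<And>y. y \<in> U \<Longrightarrow> f y = h y" "f differentiable at x"
  shows "h differentiable at x"
  using assms has_derivative_transform_within_open unfolding differentiable_def by blast

lemma Ck_cong:
  assumes "open U" "\<And>y. y \<in> U \<Longrightarrow> f y = h y" "Ck U k f"
  shows "Ck U k h"
  using assms(2,3)
proof (induction k arbitrary: f h)
  case 0
  then show ?case
    using differentiable_at_cong_open[OF \<open>open U\<close>, of _ f h] by simp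
next
  case (Suc k)
  have "Ck U k (pd j h)" for j
    using Suc.IH[of "pd j f" "pd j h"] Suc.prems pd_cong[OF \<open>open U\<close>, of _ f h] by simp
  with Suc.prems show ?case
    using differentiable_at_cong_open[OF \<open>open U\<close>, of _ f h] by simp
qed

lemma Ck_const: "Ck (U :: (real^'n::finite) set) k (\<lambda>x. c)"
proof (induction k arbitrary: c)
  case (Suc k c)
  have "pd j (\<lambda>x. c) = (\<lambda>x::real^'n. 0)" for j
    by (simp add: fun_eq_iff)
  then show ?case
    using Suc.IH by simp
qed simp

lemma Ck_add:
  assumes "open U" "Ck U k f" "Ck U k h"
  shows "Ck U k (\<lambda>x. f x + h x)"
  using assms(2,3)
proof (induction k arbitrary: f h)
  case (Suc k)
  have "Ck U k (pd j (\<lambda>x. f x + h x))" for j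
  proof (rule Ck_cong[OF \<open>open U\<close>])
    show "Ck U k (\<lambda>x. pd j f x + pd j h x)"
      using Suc by simp
    show "pd j f y + pd j h y = pd j (\<lambda>x. f x + h x) y" if "y \<in> U" for y
      using Suc.prems that by (simp add: pd_add Ck_differentiable)
  qed
  with Suc.prems show ?case
    by simp
qed simp

lemma Ck_mult:
  assumes "open U" "Ck U k f" "Ck U k h"
  shows "Ck U k (\<lambda>x. f x * h x)"
  using assms(2,3)
proof (induction k arbitrary: f h)
  case (Suc k)
  have "Ck U k (pd j (\<lambda>x. f x * h x))" for j
  proof (rule Ck_cong[OF \<open>open U\<close>])
    have "Ck U k f" "Ck U k h"
      using Suc.prems Ck_Suc_Ck by blast+
    then show "Ck U k (\<lambda>x. pd j f x * h x + f x * pd j h x)"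
      using Suc by (simp add: Ck_add[OF \<open>open U\<close>])
    show "pd j f y * h y + f y * pd j h y = pd j (\<lambda>x. f x * h x) y" if "y \<in> U" for y
      using Suc.prems that by (simp add: pd_mult Ck_differentiable)
  qed
  with Suc.prems show ?case
    by simp
qed simp

lemma Cinf_on_const: "Cinf_on U (\<lambda>x. c)"
  by (simp add: Cinf_on_iff_Ck Ck_const)

lemma Cinf_on_add: "open U \<Longrightarrow> Cinf_on U f \<Longrightarrow> Cinf_on U h \<Longrightarrow> Cinf_on U (\<lambda>x. f x + h x)"
  by (simp add: Cinf_on_iff_Ck Ck_add)

lemma Cinf_on_mult: "open U \<Longrightarrow> Cinf_on U f \<Longrightarrow> Cinf_on U h \<Longrightarrow> Cinf_on U (\<lambda>x. f x * h x)"
  by (simp add: Cinf_on_iff_Ck Ck_mult)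

lemma Cinf_on_diff:
  assumes "open U" "Cinf_on U f" "Cinf_on U h"
  shows "Cinf_on U (\<lambda>x. f x - h x)"
  using Cinf_on_add[OF assms(1,2) Cinf_on_mult[OF assms(1) Cinf_on_const assms(3)], of "-1"]
  by simp

lemma Cinf_on_sum:
  assumes "open U" "\<And>i. i \<in> S \<Longrightarrow> Cinf_on U (F i)"
  shows "Cinf_on U (\<lambda>x. \<Sum>i\<in>S. F i x)"
proof (cases "finite S")
  case True
  then show ?thesis
    using assms(2) by induction (simp_all add: Cinf_on_const Cinf_on_add[OF assms(1)])
qed (simp add: Cinf_on_const)

lemma Cinf_on_if_zero: "Cinf_on U f \<Longrightarrow> Cinf_on U (\<lambda>x. if P then f x else 0)"
  by (cases P) (simp_all add: Cinf_on_const)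

lemmas Cinf_on_intros = Cinf_on_const Cinf_on_add Cinf_on_mult Cinf_on_diff Cinf_on_sum Cinf_on_pd Cinf_on_if_zero

lemma Cinf_on_hq:
  assumes "open U"
    and "\<And>\<mu> \<nu>. Cinf_on U (g \<mu> \<nu>)"
    and "\<And>\<alpha> \<beta>. Cinf_on U (\<omega> \<alpha> \<beta>)"
    and "\<And>\<alpha> \<beta> \<gamma>. Cinf_on U (\<Gamma> \<alpha> \<beta> \<gamma>)"
  shows "Cinf_on U (hq g \<omega> \<Gamma> \<mu> \<nu>)"
proof -
  have "Cinf_on U (torsion \<Gamma> a b c)" for a b c
    unfolding torsion_def[abs_def] by (intro Cinf_on_intros assms)
  then have "Cinf_on U (covT \<Gamma> a b c d)" for a b c d
    unfolding covT_def[abs_def] by (intro Cinf_on_intros assms)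
  moreover have "Cinf_on U (curv \<Gamma> a b c d)" for a b c d
    unfolding curv_def[abs_def] by (intro Cinf_on_intros assms)
  ultimately have "Cinf_on U (Rq g \<omega> \<Gamma> a b)" for a b
    unfolding Rq_def[abs_def] by (intro Cinf_on_intros assms)
  moreover have "Cinf_on U (Glow g \<Gamma> a b c)" for a b c
    unfolding Glow_def[abs_def] by (intro Cinf_on_intros assms)
  ultimately show ?thesis
    unfolding hq_def[abs_def] by (intro Cinf_on_intros assms)
qed

lemma fst_gt [simp]: "fst (gt g \<omega> \<Gamma> \<mu> \<nu>) = g \<mu> \<nu>"
  by (simp add: gt_def)

lemma qsmooth_gt:
  assumes "open U"
    and "\<And>\<mu> \<nu>. Cinf_on U (g \<mu> \<nu>)"
    and "\<And>\<alpha> \<beta>. Cinf_on U (\<omega> \<alpha> \<beta>)"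
    and "\<And>\<alpha> \<beta> \<gamma>. Cinf_on U (\<Gamma> \<alpha> \<beta> \<gamma>)"
  shows "qsmooth U (gt g \<omega> \<Gamma> \<mu> \<nu>)"
  unfolding qsmooth_def gt_def fst_conv snd_conv
  by (intro conjI Cinf_on_mult Cinf_on_const Cinf_on_hq assms)

section \<open>Quantised functions, forms and the pairing\<close>

lemma qeqU_trans [trans]: "qeqU U a b \<Longrightarrow> qeqU U b c \<Longrightarrow> qeqU U a c"
  by (simp add: qeqU_def)

lemma qsum_cong: "(\<And>i. i \<in> S \<Longrightarrow> qeqU U (F i) (G i)) \<Longrightarrow> qeqU U (qsum F S) (qsum G S)"
  by (simp add: qeqU_def qsum_def)

lemma qsum_qadd: "qsum (\<lambda>i. qadd (F i) (G i)) S = qadd (qsum F S) (qsum G S)"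
  by (simp add: qsum_def qadd_def sum.distrib)

lemma pbr_cong_right:
  assumes "open U" "x \<in> U" "\<And>y. y \<in> U \<Longrightarrow> h y = h' y"
  shows "pbr \<omega> f h x = pbr \<omega> f h' x"
  using pd_cong[OF assms] by (simp add: pbr_def)

lemma qmult_cong_right:
  assumes "open U" "qeqU U b b'"
  shows "qeqU U (qmult \<omega> a b) (qmult \<omega> a b')"
  using assms pbr_cong_right[OF assms(1), of _ "fst b" "fst b'"]
  by (simp add: qeqU_def qmult_def)

lemma qmult_one_right: "qmult \<omega> a ((\<lambda>x. 1), (\<lambda>x. 0)) = a"
  by (simp add: qmult_def pbr_def)

lemma qrmult_one_right: "qrmult \<omega> \<Gamma> \<eta> ((\<lambda>x. 1), (\<lambda>x. 0)) = \<eta>"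
  by (simp add: qrmult_def)

definition fsum :: "('i \<Rightarrow> 'n form) \<Rightarrow> 'i set \<Rightarrow> 'n form" where
  "fsum F S = (\<lambda>\<kappa>. qsum (\<lambda>i. F i \<kappa>) S)"

lemma fsum_insert: "finite S \<Longrightarrow> a \<notin> S \<Longrightarrow> fsum F (insert a S) = fadd (F a) (fsum F S)"
  by (simp add: fsum_def fadd_def qadd_def qsum_def)

lemma fsmooth_fsum:
  assumes "open U" "\<And>i. i \<in> S \<Longrightarrow> fsmooth U (F i)"
  shows "fsmooth U (fsum F S)"
  using assms by (simp add: fsmooth_def qsmooth_def fsum_def qsum_def Cinf_on_sum)

lemma fsmooth_dx: "fsmooth U (dx \<mu>)"
  by (simp add: fsmooth_def qsmooth_def dx_def Cinf_on_const)

lemma B_fsum_left: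
  fixes B :: "'n::finite form \<Rightarrow> 'n form \<Rightarrow> 'n qf"
  assumes B_add_left: "\<And>\<eta> \<eta>' \<zeta>. fsmooth U \<eta> \<Longrightarrow> fsmooth U \<eta>' \<Longrightarrow> fsmooth U \<zeta> \<Longrightarrow>
          qeqU U (B (fadd \<eta> \<eta>') \<zeta>) (qadd (B \<eta> \<zeta>) (B \<eta>' \<zeta>))"
    and "open U" "finite S" "\<And>i. i \<in> S \<Longrightarrow> fsmooth U (F i)" "fsmooth U \<zeta>"
  shows "qeqU U (B (fsum F S) \<zeta>) (qsum (\<lambda>i. B (F i) \<zeta>) S)"
  using assms(3,4)
proof induction
  case empty
  have "fadd (fsum F {}) (fsum F {}) = fsum F {}"
    by (simp add: fsum_def fadd_def qadd_def qsum_def)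
  moreover have "fsmooth U (fsum F {})"
    by (rule fsmooth_fsum[OF \<open>open U\<close>]) simp
  ultimately have "qeqU U (B (fsum F {}) \<zeta>) (qadd (B (fsum F {}) \<zeta>) (B (fsum F {}) \<zeta>))"
    using B_add_left \<open>fsmooth U \<zeta>\<close> by metis
  then show ?case
    by (simp add: qeqU_def qadd_def qsum_def)
next
  case (insert a S)
  have "qeqU U (B (fsum F (insert a S)) \<zeta>) (qadd (B (F a) \<zeta>) (B (fsum F S) \<zeta>))"
    using insert B_add_left[of "F a" "fsum F S" \<zeta>] fsmooth_fsum[OF \<open>open U\<close>, of S F] \<open>fsmooth U \<zeta>\<close>
    by (simp add: fsum_insert)
  with insert show ?case
    by (simp add: qeqU_def qadd_def qsum_def)
qed

lemma fst_dx [simp]: "fst (dx \<mu> \<kappa>) = (\<lambda>x. if \<kappa> = \<mu> then 1 else 0)"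
  and snd_dx [simp]: "snd (dx \<mu> \<kappa>) = (\<lambda>x. 0)"
  by (simp_all add: dx_def)

lemma cov1_dx [simp]: "cov1 \<Gamma> \<beta> (\<lambda>\<delta> x. if \<delta> = \<gamma> then 1 else 0) \<kappa> x = - \<Gamma> \<gamma> \<beta> \<kappa> x"
  by (simp add: cov1_def mult_if_delta)

text \<open>Coefficients c_gamma of dx^mu * f = sum_gamma c_gamma * dx^gamma. The second summand of
  snd c_gamma comes from nabla_beta dx^mu = - Gamma^mu_{beta gamma} dx^gamma, with weight 1/2 from
  each of the two one-sided products.\<close>

definition dx_rmult_coeff :: "('n::finite \<Rightarrow> 'n \<Rightarrow> 'n fn) \<Rightarrow> ('n \<Rightarrow> 'n \<Rightarrow> 'n \<Rightarrow> 'n fn)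
    \<Rightarrow> 'n qf \<Rightarrow> 'n \<Rightarrow> 'n \<Rightarrow> 'n qf" where
  "dx_rmult_coeff \<omega> \<Gamma> f \<mu> \<gamma> =
     ((\<lambda>x. if \<gamma> = \<mu> then fst f x else 0),
      (\<lambda>x. (if \<gamma> = \<mu> then snd f x else 0)
         + (\<Sum>\<alpha>\<in>UNIV. \<Sum>\<beta>\<in>UNIV. \<omega> \<alpha> \<beta> x * pd \<alpha> (fst f) x * \<Gamma> \<mu> \<beta> \<gamma> x)))"

lemma qrmult_dx_eq_fsum_qlmult:
  "qrmult \<omega> \<Gamma> (dx \<mu>) f = fsum (\<lambda>\<gamma>. qlmult \<omega> \<Gamma> (dx_rmult_coeff \<omega> \<Gamma> f \<mu> \<gamma>) (dx \<gamma>)) UNIV"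
proof (intro ext prod_eqI)
  fix \<kappa> x
  show "fst (qrmult \<omega> \<Gamma> (dx \<mu>) f \<kappa>) x
      = fst (fsum (\<lambda>\<gamma>. qlmult \<omega> \<Gamma> (dx_rmult_coeff \<omega> \<Gamma> f \<mu> \<gamma>) (dx \<gamma>)) UNIV \<kappa>) x"
    by (simp add: qrmult_def qlmult_def fsum_def qsum_def dx_rmult_coeff_def mult_if_delta
        mult.commute[of _ "if _ then 1 else 0"])
  have "(\<Sum>\<alpha>\<in>UNIV. \<Sum>\<beta>\<in>UNIV. \<omega> \<alpha> \<beta> x * (if \<gamma> = \<mu> then pd \<alpha> (fst f) x else 0) * \<Gamma> \<gamma> \<beta> \<kappa> x)
      = (if \<gamma> = \<mu> then \<Sum>\<alpha>\<in>UNIV. \<Sum>\<beta>\<in>UNIV. \<omega> \<alpha> \<beta> x * pd \<alpha> (fst f) x * \<Gamma> \<mu> \<beta> \<kappa> x else 0)" for \<gamma>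
    by (cases "\<gamma> = \<mu>") simp_all
  then show "snd (qrmult \<omega> \<Gamma> (dx \<mu>) f \<kappa>) x
      = snd (fsum (\<lambda>\<gamma>. qlmult \<omega> \<Gamma> (dx_rmult_coeff \<omega> \<Gamma> f \<mu> \<gamma>) (dx \<gamma>)) UNIV \<kappa>) x"
    by (simp add: qrmult_def qlmult_def fsum_def qsum_def dx_rmult_coeff_def sum_negf sum_subtractf
        sum_divide_distrib[symmetric]
        mult_if_delta mult.commute[of _ "if _ then 1 else 0"])
qed

lemma qsmooth_dx_rmult_coeff:
  assumes "open U" "\<And>\<alpha> \<beta>. Cinf_on U (\<omega> \<alpha> \<beta>)" "\<And>\<alpha> \<beta> \<gamma>. Cinf_on U (\<Gamma> \<alpha> \<beta> \<gamma>)" "qsmooth U f"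
  shows "qsmooth U (dx_rmult_coeff \<omega> \<Gamma> f \<mu> \<gamma>)"
proof -
  have "Cinf_on U (fst f)" "Cinf_on U (snd f)"
    using assms(4) by (simp_all add: qsmooth_def)
  then show ?thesis
    unfolding qsmooth_def dx_rmult_coeff_def fst_conv snd_conv
    by (intro conjI Cinf_on_intros assms(1-3))
qed

lemma fsmooth_qlmult:
  assumes "open U" "\<And>\<alpha> \<beta>. Cinf_on U (\<omega> \<alpha> \<beta>)" "\<And>\<alpha> \<beta> \<gamma>. Cinf_on U (\<Gamma> \<alpha> \<beta> \<gamma>)"
    and "qsmooth U f" "fsmooth U \<eta>"
  shows "fsmooth U (qlmult \<omega> \<Gamma> f \<eta>)"
proof -
  have "Cinf_on U (fst f)" "Cinf_on U (snd f)" "Cinf_on U (fst (\<eta> \<alpha>))" "Cinf_on U (snd (\<eta> \<alpha>))" for \<alpha>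
    using assms(4,5) by (simp_all add: fsmooth_def qsmooth_def)
  then show ?thesis
    unfolding fsmooth_def qsmooth_def qlmult_def cov1_def[abs_def] fst_conv snd_conv
    by (intro allI conjI Cinf_on_intros assms(1-3))
qed

lemma B_qlmult_dx:
  fixes B :: "'n::finite form \<Rightarrow> 'n form \<Rightarrow> 'n qf"
  assumes B_bimodule: "\<And>f \<eta> \<zeta> k. qsmooth U f \<Longrightarrow> fsmooth U \<eta> \<Longrightarrow> fsmooth U \<zeta> \<Longrightarrow> qsmooth U k \<Longrightarrow>
          qeqU U (B (qlmult \<omega> \<Gamma> f \<eta>) (qrmult \<omega> \<Gamma> \<zeta> k)) (qmult \<omega> (qmult \<omega> f (B \<eta> \<zeta>)) k)"
    and B_dx: "\<And>\<mu> \<nu>. qeqU U (B (dx \<mu>) (dx \<nu>)) (gtinv \<mu> \<nu>)"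
    and "open U" "qsmooth U f"
  shows "qeqU U (B (qlmult \<omega> \<Gamma> f (dx \<gamma>)) (dx \<nu>)) (qmult \<omega> f (gtinv \<gamma> \<nu>))"
proof -
  have "qeqU U (B (qlmult \<omega> \<Gamma> f (dx \<gamma>)) (qrmult \<omega> \<Gamma> (dx \<nu>) ((\<lambda>x. 1), (\<lambda>x. 0))))
      (qmult \<omega> (qmult \<omega> f (B (dx \<gamma>) (dx \<nu>))) ((\<lambda>x. 1), (\<lambda>x. 0)))"
    by (rule B_bimodule[OF \<open>qsmooth U f\<close> fsmooth_dx fsmooth_dx]) (simp add: qsmooth_def Cinf_on_const)
  then have "qeqU U (B (qlmult \<omega> \<Gamma> f (dx \<gamma>)) (dx \<nu>)) (qmult \<omega> f (B (dx \<gamma>) (dx \<nu>)))"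
    by (simp only: qrmult_one_right qmult_one_right)
  then show ?thesis
    using qmult_cong_right[OF \<open>open U\<close> B_dx] qeqU_trans by blast
qed

lemma B_qrmult_dx:
  fixes B :: "'n::finite form \<Rightarrow> 'n form \<Rightarrow> 'n qf"
  assumes B_add_left: "\<And>\<eta> \<eta>' \<zeta>. fsmooth U \<eta> \<Longrightarrow> fsmooth U \<eta>' \<Longrightarrow> fsmooth U \<zeta> \<Longrightarrow>
          qeqU U (B (fadd \<eta> \<eta>') \<zeta>) (qadd (B \<eta> \<zeta>) (B \<eta>' \<zeta>))"
    and B_bimodule: "\<And>f \<eta> \<zeta> k. qsmooth U f \<Longrightarrow> fsmooth U \<eta> \<Longrightarrow> fsmooth U \<zeta> \<Longrightarrow> qsmooth U k \<Longrightarrow>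
          qeqU U (B (qlmult \<omega> \<Gamma> f \<eta>) (qrmult \<omega> \<Gamma> \<zeta> k)) (qmult \<omega> (qmult \<omega> f (B \<eta> \<zeta>)) k)"
    and B_dx: "\<And>\<mu> \<nu>. qeqU U (B (dx \<mu>) (dx \<nu>)) (gtinv \<mu> \<nu>)"
    and "open U" "\<And>\<alpha> \<beta>. Cinf_on U (\<omega> \<alpha> \<beta>)" "\<And>\<alpha> \<beta> \<gamma>. Cinf_on U (\<Gamma> \<alpha> \<beta> \<gamma>)" "qsmooth U f"
  shows "qeqU U (B (qrmult \<omega> \<Gamma> (dx \<mu>) f) (dx \<nu>))
           (qsum (\<lambda>\<gamma>. qmult \<omega> (dx_rmult_coeff \<omega> \<Gamma> f \<mu> \<gamma>) (gtinv \<gamma> \<nu>)) UNIV)"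
proof -
  have coeff: "qsmooth U (dx_rmult_coeff \<omega> \<Gamma> f \<mu> \<gamma>)" for \<gamma>
    using qsmooth_dx_rmult_coeff assms(4-7) by blast
  have "qeqU U (B (qrmult \<omega> \<Gamma> (dx \<mu>) f) (dx \<nu>))
           (qsum (\<lambda>\<gamma>. B (qlmult \<omega> \<Gamma> (dx_rmult_coeff \<omega> \<Gamma> f \<mu> \<gamma>) (dx \<gamma>)) (dx \<nu>)) UNIV)"
    unfolding qrmult_dx_eq_fsum_qlmult
    by (rule B_fsum_left[OF B_add_left \<open>open U\<close> finite_class.finite_UNIV
          fsmooth_qlmult[OF assms(4-6) coeff fsmooth_dx] fsmooth_dx])
  also have "qeqU U \<dots> (qsum (\<lambda>\<gamma>. qmult \<omega> (dx_rmult_coeff \<omega> \<Gamma> f \<mu> \<gamma>) (gtinv \<gamma> \<nu>)) UNIV)"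
    by (intro qsum_cong B_qlmult_dx[OF B_bimodule B_dx \<open>open U\<close> coeff])
  finally show ?thesis .
qed

lemma qsum_qmult_dx_rmult_coeff:
  "qsum (\<lambda>\<gamma>. qmult \<omega> (dx_rmult_coeff \<omega> \<Gamma> f \<mu> \<gamma>) (A \<gamma>)) UNIV
     = qadd (qmult \<omega> f (A \<mu>))
         ((\<lambda>x. 0), (\<lambda>x. \<Sum>\<gamma>\<in>UNIV. (\<Sum>\<alpha>\<in>UNIV. \<Sum>\<beta>\<in>UNIV. \<omega> \<alpha> \<beta> x * pd \<alpha> (fst f) x * \<Gamma> \<mu> \<beta> \<gamma> x)
                                     * fst (A \<gamma>) x))"
proof -
  have "qmult \<omega> (dx_rmult_coeff \<omega> \<Gamma> f \<mu> \<gamma>) (A \<gamma>)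
     = qadd (if \<gamma> = \<mu> then qmult \<omega> f (A \<mu>) else ((\<lambda>x. 0), (\<lambda>x. 0)))
         ((\<lambda>x. 0), (\<lambda>x. (\<Sum>\<alpha>\<in>UNIV. \<Sum>\<beta>\<in>UNIV. \<omega> \<alpha> \<beta> x * pd \<alpha> (fst f) x * \<Gamma> \<mu> \<beta> \<gamma> x)
                         * fst (A \<gamma>) x))" for \<gamma>
    by (cases "\<gamma> = \<mu>") (simp_all add: qmult_def qadd_def dx_rmult_coeff_def pbr_def algebra_simps)
  then show ?thesis
    by (simp add: qsum_qadd) (simp add: qsum_def qadd_def if_distrib[of fst] if_distrib[of snd] if_distribR
        cong: if_cong)
qed

lemma qsum_B_qrmult_dx:
  fixes B :: "'n::finite form \<Rightarrow> 'n form \<Rightarrow> 'n qf" and F :: "'n \<Rightarrow> 'n \<Rightarrow> 'n qf"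
  assumes B_add_left: "\<And>\<eta> \<eta>' \<zeta>. fsmooth U \<eta> \<Longrightarrow> fsmooth U \<eta>' \<Longrightarrow> fsmooth U \<zeta> \<Longrightarrow>
          qeqU U (B (fadd \<eta> \<eta>') \<zeta>) (qadd (B \<eta> \<zeta>) (B \<eta>' \<zeta>))"
    and B_bimodule: "\<And>f \<eta> \<zeta> k. qsmooth U f \<Longrightarrow> fsmooth U \<eta> \<Longrightarrow> fsmooth U \<zeta> \<Longrightarrow> qsmooth U k \<Longrightarrow>
          qeqU U (B (qlmult \<omega> \<Gamma> f \<eta>) (qrmult \<omega> \<Gamma> \<zeta> k)) (qmult \<omega> (qmult \<omega> f (B \<eta> \<zeta>)) k)"
    and B_dx: "\<And>\<mu> \<nu>. qeqU U (B (dx \<mu>) (dx \<nu>)) (gtinv \<mu> \<nu>)"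
    and "open U" "\<And>\<alpha> \<beta>. Cinf_on U (\<omega> \<alpha> \<beta>)" "\<And>\<alpha> \<beta> \<gamma>. Cinf_on U (\<Gamma> \<alpha> \<beta> \<gamma>)"
    and "\<And>\<mu> \<nu>. qsmooth U (F \<mu> \<nu>)"
  shows "qeqU U (qsum (\<lambda>\<mu>. qsum (\<lambda>\<nu>. B (qrmult \<omega> \<Gamma> (dx \<mu>) (F \<mu> \<nu>)) (dx \<nu>)) UNIV) UNIV)
           (qadd (qsum (\<lambda>\<mu>. qsum (\<lambda>\<nu>. qmult \<omega> (F \<mu> \<nu>) (gtinv \<mu> \<nu>)) UNIV) UNIV)
             ((\<lambda>x. 0), (\<lambda>x. \<Sum>\<mu>\<in>UNIV. \<Sum>\<nu>\<in>UNIV. \<Sum>\<gamma>\<in>UNIV.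
                (\<Sum>\<alpha>\<in>UNIV. \<Sum>\<beta>\<in>UNIV. \<omega> \<alpha> \<beta> x * pd \<alpha> (fst (F \<mu> \<nu>)) x * \<Gamma> \<mu> \<beta> \<gamma> x)
                * fst (gtinv \<gamma> \<nu>) x)))"
proof -
  have "qeqU U (B (qrmult \<omega> \<Gamma> (dx \<mu>) (F \<mu> \<nu>)) (dx \<nu>))
      (qsum (\<lambda>\<gamma>. qmult \<omega> (dx_rmult_coeff \<omega> \<Gamma> (F \<mu> \<nu>) \<mu> \<gamma>) (gtinv \<gamma> \<nu>)) UNIV)" for \<mu> \<nu>
    by (rule B_qrmult_dx[OF B_add_left B_bimodule B_dx assms(4-7)])
  then have "qeqU U (qsum (\<lambda>\<mu>. qsum (\<lambda>\<nu>. B (qrmult \<omega> \<Gamma> (dx \<mu>) (F \<mu> \<nu>)) (dx \<nu>)) UNIV) UNIV)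
      (qsum (\<lambda>\<mu>. qsum (\<lambda>\<nu>.
         qsum (\<lambda>\<gamma>. qmult \<omega> (dx_rmult_coeff \<omega> \<Gamma> (F \<mu> \<nu>) \<mu> \<gamma>) (gtinv \<gamma> \<nu>)) UNIV) UNIV) UNIV)"
    by (intro qsum_cong)
  then show ?thesis
    by (simp only: qsum_qmult_dx_rmult_coeff qsum_qadd) (simp add: qsum_def)
qed

lemma qsum_qmult_right_inverse_trace:
  fixes F A :: "'n::finite \<Rightarrow> 'n \<Rightarrow> 'n qf"
  assumes "open U"
    and F_sym: "\<And>\<mu> \<nu> x. x \<in> U \<Longrightarrow> fst (F \<mu> \<nu>) x = fst (F \<nu> \<mu>) x"
    and A_sym: "\<And>\<mu> \<nu> x. x \<in> U \<Longrightarrow> fst (A \<mu> \<nu>) x = fst (A \<nu> \<mu>) x"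
    and right_inverse: "\<And>\<mu> \<gamma>. qeqU U (qsum (\<lambda>\<nu>. qmult \<omega> (F \<mu> \<nu>) (A \<nu> \<gamma>)) UNIV)
          ((\<lambda>x. if \<mu> = \<gamma> then 1 else 0), (\<lambda>x. 0))"
  shows "qeqU U (qsum (\<lambda>\<mu>. qsum (\<lambda>\<nu>. qmult \<omega> (F \<mu> \<nu>) (A \<mu> \<nu>)) UNIV) UNIV)
           ((\<lambda>x. real CARD('n)), (\<lambda>x. 0))"
proof -
  have "qeqU U (qsum (\<lambda>\<mu>. qsum (\<lambda>\<nu>. qmult \<omega> (F \<mu> \<nu>) (A \<mu> \<nu>)) UNIV) UNIV)
                (qsum (\<lambda>\<mu>. qsum (\<lambda>\<nu>. qmult \<omega> (F \<mu> \<nu>) (A \<nu> \<mu>)) UNIV) UNIV)"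
    unfolding qeqU_def
  proof (intro ballI conjI)
    fix x assume x: "x \<in> U"
    show "fst (qsum (\<lambda>\<mu>. qsum (\<lambda>\<nu>. qmult \<omega> (F \<mu> \<nu>) (A \<mu> \<nu>)) UNIV) UNIV) x
        = fst (qsum (\<lambda>\<mu>. qsum (\<lambda>\<nu>. qmult \<omega> (F \<mu> \<nu>) (A \<nu> \<mu>)) UNIV) UNIV) x"
      using A_sym[OF x] by (simp add: qsum_def qmult_def)
    have "(\<Sum>\<mu>\<in>UNIV. \<Sum>\<nu>\<in>UNIV. fst (F \<mu> \<nu>) x * snd (A \<mu> \<nu>) x)
        = (\<Sum>\<mu>\<in>UNIV. \<Sum>\<nu>\<in>UNIV. fst (F \<mu> \<nu>) x * snd (A \<nu> \<mu>) x)"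
      using F_sym[OF x] by (subst sum.swap) simp
    moreover have "(\<Sum>\<mu>\<in>UNIV. \<Sum>\<nu>\<in>UNIV. pbr \<omega> (fst (F \<mu> \<nu>)) (fst (A \<mu> \<nu>)) x / 2)
        = (\<Sum>\<mu>\<in>UNIV. \<Sum>\<nu>\<in>UNIV. pbr \<omega> (fst (F \<mu> \<nu>)) (fst (A \<nu> \<mu>)) x / 2)"
      by (intro sum.cong refl arg_cong[where f="\<lambda>t. t / 2"] pbr_cong_right[OF \<open>open U\<close> x] A_sym)
    ultimately show "snd (qsum (\<lambda>\<mu>. qsum (\<lambda>\<nu>. qmult \<omega> (F \<mu> \<nu>) (A \<mu> \<nu>)) UNIV) UNIV) x
        = snd (qsum (\<lambda>\<mu>. qsum (\<lambda>\<nu>. qmult \<omega> (F \<mu> \<nu>) (A \<nu> \<mu>)) UNIV) UNIV) x"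
      by (simp add: qsum_def qmult_def sum.distrib A_sym[OF x])
  qed
  also have "qeqU U \<dots> (qsum (\<lambda>\<mu>::'n. ((\<lambda>x. 1), (\<lambda>x. 0))) UNIV)"
  proof (rule qsum_cong)
    show "qeqU U (qsum (\<lambda>\<nu>. qmult \<omega> (F \<mu> \<nu>) (A \<nu> \<mu>)) UNIV) ((\<lambda>x. 1), (\<lambda>x. 0))" for \<mu>
      using right_inverse[of \<mu> \<mu>] by simp
  qed
  also have "qsum (\<lambda>\<mu>::'n. ((\<lambda>x. 1), (\<lambda>x. 0))) UNIV = ((\<lambda>x. real CARD('n)), (\<lambda>x. 0))"
    by (simp add: qsum_def)
  finally show ?thesis .
qed

section \<open>Trace identities for the metric\<close>

lemma transpose_add: "transpose (A + B) = transpose A + transpose (B::'a::semiring_1^'n^'m)"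
  by (simp add: transpose_def vec_eq_iff)

lemma trace_transpose: "trace (transpose A) = trace (A::'a::semiring_1^'n^'n)"
  by (simp add: trace_def transpose_def)

lemma trace_mult_transpose:
  "trace (A ** transpose B) = (\<Sum>i\<in>UNIV. \<Sum>j\<in>UNIV. A$i$j * B$i$j)"
  by (simp add: trace_def matrix_matrix_mult_def transpose_def)

lemma transpose_right_inverse_symmetric:
  fixes G P :: "'a::comm_semiring_1^'n^'n"
  assumes "transpose G = G" "G ** P = mat 1"
  shows "transpose P = P"
proof -
  have "transpose P ** G = mat 1"
    using assms matrix_transpose_mul[of G P] by simp
  then have "transpose P = transpose P ** (G ** P)"
    using assms(2) by simp
  also have "\<dots> = P"
    by (simp add: matrix_mul_assoc \<open>transpose P ** G = mat 1\<close>)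
  finally show ?thesis .
qed

lemma sum_antisym_sym_eq_0:
  fixes w Q :: "'i \<Rightarrow> 'i \<Rightarrow> real"
  assumes "\<And>\<alpha> \<beta>. w \<alpha> \<beta> = - w \<beta> \<alpha>" "\<And>\<alpha> \<beta>. Q \<alpha> \<beta> = Q \<beta> \<alpha>"
  shows "(\<Sum>\<alpha>\<in>S. \<Sum>\<beta>\<in>S. w \<alpha> \<beta> * Q \<alpha> \<beta>) = 0"
proof -
  have "(\<Sum>\<alpha>\<in>S. \<Sum>\<beta>\<in>S. w \<alpha> \<beta> * Q \<alpha> \<beta>) = (\<Sum>\<beta>\<in>S. \<Sum>\<alpha>\<in>S. w \<alpha> \<beta> * Q \<alpha> \<beta>)"
    by (rule sum.swap)
  also have "\<dots> = - (\<Sum>\<alpha>\<in>S. \<Sum>\<beta>\<in>S. w \<alpha> \<beta> * Q \<alpha> \<beta>)"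
  proof -
    have "w \<alpha> \<beta> * Q \<alpha> \<beta> = - (w \<beta> \<alpha> * Q \<beta> \<alpha>)" for \<alpha> \<beta>
      using assms(1)[of \<alpha> \<beta>] assms(2)[of \<alpha> \<beta>] by simp
    then have "(\<Sum>\<beta>\<in>S. \<Sum>\<alpha>\<in>S. w \<alpha> \<beta> * Q \<alpha> \<beta>) = (\<Sum>\<beta>\<in>S. \<Sum>\<alpha>\<in>S. - (w \<beta> \<alpha> * Q \<beta> \<alpha>))"
      by (intro sum.cong refl)
    then show ?thesis
      by (simp add: sum_negf)
  qed
  finally show ?thesis
    by simp
qed

text \<open>Both pairings are multiples of tr(D_alpha P D_beta P), the second one because
  D = G Gamma + (G Gamma)^T; that trace is symmetric in alpha, beta by cyclicity.\<close>

lemma trace_metric_pairings_vanish: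
  fixes G P :: "real^'n^'n" and D \<Gamma> :: "'i \<Rightarrow> real^'n^'n" and w :: "'i \<Rightarrow> 'i \<Rightarrow> real"
  assumes w_antisym: "\<And>\<alpha> \<beta>. w \<alpha> \<beta> = - w \<beta> \<alpha>"
    and G_sym: "transpose G = G" and P_sym: "transpose P = P" and PG: "P ** G = mat 1"
    and D_compat: "\<And>\<beta>. D \<beta> = G ** \<Gamma> \<beta> + transpose (G ** \<Gamma> \<beta>)"
  shows "(\<Sum>\<alpha>\<in>S. \<Sum>\<beta>\<in>S. w \<alpha> \<beta> * trace (D \<alpha> ** transpose (P ** D \<beta> ** P))) = 0"
    and "(\<Sum>\<alpha>\<in>S. \<Sum>\<beta>\<in>S. w \<alpha> \<beta> * trace (D \<alpha> ** transpose (\<Gamma> \<beta> ** P))) = 0"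
proof -
  have D_sym: "transpose (D \<beta>) = D \<beta>" for \<beta>
    by (subst (1 2) D_compat) (simp add: transpose_add add.commute)
  have cyclic: "trace (A ** B ** C) = trace (B ** C ** A)" for A B C :: "real^'n^'n"
    using trace_mul_sym[of A "B ** C"] by (simp add: matrix_mul_assoc)
  have PGX: "P ** (G ** X) = X" for X
    by (simp add: matrix_mul_assoc PG)
  have Q_sym: "trace (D \<alpha> ** P ** D \<beta> ** P) = trace (D \<beta> ** P ** D \<alpha> ** P)" for \<alpha> \<beta>
    using trace_mul_sym[of "D \<alpha> ** P" "D \<beta> ** P"] by (simp add: matrix_mul_assoc)
  have Q_vanish: "(\<Sum>\<alpha>\<in>S. \<Sum>\<beta>\<in>S. w \<alpha> \<beta> * trace (D \<alpha> ** P ** D \<beta> ** P)) = 0"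
    by (rule sum_antisym_sym_eq_0[OF w_antisym Q_sym])
  then show "(\<Sum>\<alpha>\<in>S. \<Sum>\<beta>\<in>S. w \<alpha> \<beta> * trace (D \<alpha> ** transpose (P ** D \<beta> ** P))) = 0"
    by (simp add: matrix_transpose_mul P_sym D_sym matrix_mul_assoc)
  have pairing: "trace (D \<alpha> ** transpose (\<Gamma> \<beta> ** P)) = trace (D \<alpha> ** \<Gamma> \<beta> ** P)" for \<alpha> \<beta>
  proof -
    have "trace (D \<alpha> ** transpose (\<Gamma> \<beta> ** P)) = trace (transpose (D \<alpha> ** transpose (\<Gamma> \<beta> ** P)))"
      by (rule trace_transpose[symmetric])
    also have "\<dots> = trace (\<Gamma> \<beta> ** P ** D \<alpha>)"
      by (simp add: matrix_transpose_mul D_sym)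
    finally show ?thesis
      using cyclic[of "D \<alpha>" "\<Gamma> \<beta>" P] by simp
  qed
  have "trace (D \<alpha> ** P ** D \<beta> ** P) = 2 * trace (D \<alpha> ** \<Gamma> \<beta> ** P)" for \<alpha> \<beta>
  proof -
    have "trace (D \<alpha> ** P ** D \<beta> ** P) = trace (P ** D \<alpha> ** P ** D \<beta>)"
      using trace_mul_sym[of "D \<alpha> ** P ** D \<beta>" P] by (simp add: matrix_mul_assoc)
    also have "\<dots> = trace (P ** D \<alpha> ** P ** (G ** \<Gamma> \<beta>)) + trace (P ** D \<alpha> ** P ** transpose (G ** \<Gamma> \<beta>))"
      by (subst D_compat) (simp add: matrix_add_ldistrib trace_add)
    also have "trace (P ** D \<alpha> ** P ** (G ** \<Gamma> \<beta>)) = trace (D \<alpha> ** \<Gamma> \<beta> ** P)"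
      using trace_mul_sym[of P "D \<alpha> ** \<Gamma> \<beta>"] by (simp add: matrix_mul_assoc[symmetric] PGX)
    also have "trace (P ** D \<alpha> ** P ** transpose (G ** \<Gamma> \<beta>)) = trace (D \<alpha> ** \<Gamma> \<beta> ** P)"
    proof -
      have "trace (P ** D \<alpha> ** P ** transpose (G ** \<Gamma> \<beta>)) = trace (G ** \<Gamma> \<beta> ** P ** D \<alpha> ** P)"
        by (subst trace_transpose[symmetric]) (simp add: matrix_transpose_mul P_sym D_sym G_sym matrix_mul_assoc)
      also have "\<dots> = trace (\<Gamma> \<beta> ** P ** D \<alpha>)"
        using trace_mul_sym[of "G ** \<Gamma> \<beta> ** P ** D \<alpha>" P] by (simp add: matrix_mul_assoc PG)
      finally show ?thesis
        using cyclic[of "D \<alpha>" "\<Gamma> \<beta>" P] by simp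
    qed
    finally show ?thesis
      by simp
  qed
  then have half: "w \<alpha> \<beta> * trace (D \<alpha> ** transpose (\<Gamma> \<beta> ** P))
      = 1/2 * (w \<alpha> \<beta> * trace (D \<alpha> ** P ** D \<beta> ** P))" for \<alpha> \<beta>
    by (simp add: pairing)
  have "(\<Sum>\<alpha>\<in>S. \<Sum>\<beta>\<in>S. w \<alpha> \<beta> * trace (D \<alpha> ** transpose (\<Gamma> \<beta> ** P)))
      = 1/2 * (\<Sum>\<alpha>\<in>S. \<Sum>\<beta>\<in>S. w \<alpha> \<beta> * trace (D \<alpha> ** P ** D \<beta> ** P))"
    by (simp only: sum_distrib_left half)
  with Q_vanish show "(\<Sum>\<alpha>\<in>S. \<Sum>\<beta>\<in>S. w \<alpha> \<beta> * trace (D \<alpha> ** transpose (\<Gamma> \<beta> ** P))) = 0"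
    by simp
qed

section \<open>Coordinate matrices\<close>

lemma sum_swap_pairs:
  "(\<Sum>a\<in>A. \<Sum>b\<in>B. \<Sum>c\<in>C. \<Sum>d\<in>D. f a b c d) = (\<Sum>c\<in>C. \<Sum>d\<in>D. \<Sum>a\<in>A. \<Sum>b\<in>B. f a b c d)"
proof -
  have "(\<Sum>a\<in>A. \<Sum>b\<in>B. \<Sum>c\<in>C. \<Sum>d\<in>D. f a b c d) = (\<Sum>a\<in>A. \<Sum>c\<in>C. \<Sum>b\<in>B. \<Sum>d\<in>D. f a b c d)"
    by (intro sum.cong refl sum.swap)
  also have "\<dots> = (\<Sum>c\<in>C. \<Sum>a\<in>A. \<Sum>d\<in>D. \<Sum>b\<in>B. f a b c d)"
    by (subst sum.swap) (intro sum.cong refl sum.swap)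
  also have "\<dots> = (\<Sum>c\<in>C. \<Sum>d\<in>D. \<Sum>a\<in>A. \<Sum>b\<in>B. f a b c d)"
    by (intro sum.cong refl sum.swap)
  finally show ?thesis .
qed

definition matrix_at :: "('n::finite \<Rightarrow> 'n \<Rightarrow> 'n fn) \<Rightarrow> real^'n \<Rightarrow> real^'n^'n" where
  "matrix_at A x = (\<chi> i j. A i j x)"

lemma matrix_at_component [simp]: "matrix_at A x $ i $ j = A i j x"
  by (simp add: matrix_at_def)

lemma matrix_at_mult_eq_mat_1:
  "matrix_at A x ** matrix_at B x = mat 1 \<longleftrightarrow>
     (\<forall>i j. (\<Sum>k\<in>UNIV. A i k x * B k j x) = (if i = j then 1 else 0))"
  by (simp add: vec_eq_iff matrix_matrix_mult_def mat_def)

lemma ginv_symmetric_at: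
  fixes g ginv :: "'n::finite \<Rightarrow> 'n \<Rightarrow> 'n fn"
  assumes "\<And>\<mu> \<nu>. g \<mu> \<nu> x = g \<nu> \<mu> x"
    and "\<And>\<mu> \<gamma>. (\<Sum>\<nu>\<in>UNIV. g \<mu> \<nu> x * ginv \<nu> \<gamma> x) = (if \<mu> = \<gamma> then 1 else 0)"
  shows "ginv \<mu> \<nu> x = ginv \<nu> \<mu> x"
proof -
  have "transpose (matrix_at g x) = matrix_at g x"
    using assms(1) by (simp add: transpose_def vec_eq_iff)
  moreover have "matrix_at g x ** matrix_at ginv x = mat 1"
    unfolding matrix_at_mult_eq_mat_1 using assms(2) by blast
  ultimately have "transpose (matrix_at ginv x) = matrix_at ginv x"
    by (rule transpose_right_inverse_symmetric)
  then show ?thesis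
    by (simp add: transpose_def vec_eq_iff)
qed

lemma right_inverse_unique_at:
  fixes g ginv A :: "'n::finite \<Rightarrow> 'n \<Rightarrow> 'n fn"
  assumes "\<And>\<mu> \<gamma>. (\<Sum>\<nu>\<in>UNIV. ginv \<gamma> \<nu> x * g \<nu> \<mu> x) = (if \<mu> = \<gamma> then 1 else 0)"
    and "\<And>\<mu> \<gamma>. (\<Sum>\<nu>\<in>UNIV. g \<mu> \<nu> x * A \<nu> \<gamma> x) = (if \<mu> = \<gamma> then 1 else 0)"
  shows "A \<mu> \<nu> x = ginv \<mu> \<nu> x"
proof -
  have PG: "matrix_at ginv x ** matrix_at g x = mat 1" and GA: "matrix_at g x ** matrix_at A x = mat 1"
    unfolding matrix_at_mult_eq_mat_1 using assms by (metis (full_types))+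
  have "matrix_at A x = (matrix_at ginv x ** matrix_at g x) ** matrix_at A x"
    by (simp add: PG)
  also have "\<dots> = matrix_at ginv x"
    by (simp add: GA flip: matrix_mul_assoc)
  finally have "matrix_at A x = matrix_at ginv x" .
  then show ?thesis
    by (simp add: vec_eq_iff)
qed

lemma fst_gt_right_inverse_eq:
  fixes g ginv :: "'n::finite \<Rightarrow> 'n \<Rightarrow> 'n fn" and A :: "'n \<Rightarrow> 'n \<Rightarrow> 'n qf"
  assumes "\<And>\<mu> \<gamma>. (\<Sum>\<nu>\<in>UNIV. ginv \<gamma> \<nu> x * g \<nu> \<mu> x) = (if \<mu> = \<gamma> then 1 else 0)"
    and "\<And>\<mu> \<gamma>. qeqU U (qsum (\<lambda>\<nu>. qmult \<omega> (gt g \<omega> \<Gamma> \<mu> \<nu>) (A \<nu> \<gamma>)) UNIV)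
          ((\<lambda>x. if \<mu> = \<gamma> then 1 else 0), (\<lambda>x. 0))"
    and "x \<in> U"
  shows "fst (A \<mu> \<nu>) x = ginv \<mu> \<nu> x"
proof (rule right_inverse_unique_at[where A = "\<lambda>\<mu> \<nu>. fst (A \<mu> \<nu>)"])
  show "(\<Sum>\<nu>\<in>UNIV. ginv \<gamma> \<nu> x * g \<nu> \<mu> x) = (if \<mu> = \<gamma> then 1 else 0)" for \<mu> \<gamma>
    by (rule assms(1))
  show "(\<Sum>\<nu>\<in>UNIV. g \<mu> \<nu> x * fst (A \<nu> \<gamma>) x) = (if \<mu> = \<gamma> then 1 else 0)" for \<mu> \<gamma>
    using assms(2)[of \<mu> \<gamma>] \<open>x \<in> U\<close> by (auto simp: qeqU_def qsum_def qmult_def)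
qed

lemma pd_matrix_inverse:
  fixes g ginv :: "'n::finite \<Rightarrow> 'n \<Rightarrow> 'n fn"
  assumes "open U" "x \<in> U"
    and "\<And>i j. g i j differentiable at x" "\<And>i j. ginv i j differentiable at x"
    and right_inverse: "\<And>y. y \<in> U \<Longrightarrow> matrix_at g y ** matrix_at ginv y = mat 1"
    and left_inverse: "matrix_at ginv x ** matrix_at g x = mat 1"
  shows "matrix_at (\<lambda>i j. pd \<beta> (ginv i j)) x
           = - (matrix_at ginv x ** matrix_at (\<lambda>i j. pd \<beta> (g i j)) x ** matrix_at ginv x)"
proof -
  let ?G = "matrix_at g x" and ?P = "matrix_at ginv x"
  let ?D = "matrix_at (\<lambda>i j. pd \<beta> (g i j)) x" and ?Dinv = "matrix_at (\<lambda>i j. pd \<beta> (ginv i j)) x"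
  have "?D ** ?P + ?G ** ?Dinv = 0"
    unfolding vec_eq_iff
  proof (intro allI)
    fix i j
    have "(\<Sum>k\<in>UNIV. g i k y * ginv k j y) = (if i = j then 1 else 0)" if "y \<in> U" for y
      using right_inverse[OF that] by (simp add: matrix_at_mult_eq_mat_1)
    then have "0 = pd \<beta> (\<lambda>y. \<Sum>k\<in>UNIV. g i k y * ginv k j y) x"
      using pd_cong[OF \<open>open U\<close> \<open>x \<in> U\<close>, of "\<lambda>y. if i = j then 1 else 0"] by simp
    also have "\<dots> = (\<Sum>k\<in>UNIV. pd \<beta> (g i k) x * ginv k j x + g i k x * pd \<beta> (ginv k j) x)"
      using assms(3,4) by (simp add: pd_sum pd_mult)
    finally show "(?D ** ?P + ?G ** ?Dinv) $ i $ j = 0 $ i $ j"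
      by (simp add: matrix_matrix_mult_def sum.distrib)
  qed
  then have "?P ** (?D ** ?P + ?G ** ?Dinv) = 0"
    by simp
  then have "?P ** ?D ** ?P + ?Dinv = 0"
    by (simp add: matrix_add_ldistrib matrix_mul_assoc left_inverse)
  then show ?thesis
    by (simp add: eq_neg_iff_add_eq_0 add.commute)
qed

lemma metric_poisson_pairings_vanish:
  fixes g ginv \<omega> :: "'n::finite \<Rightarrow> 'n \<Rightarrow> 'n fn" and \<Gamma> :: "'n \<Rightarrow> 'n \<Rightarrow> 'n \<Rightarrow> 'n fn"
  assumes "open U" "x \<in> U"
    and g_smooth: "\<And>\<mu> \<nu>. Cinf_on U (g \<mu> \<nu>)"
    and ginv_smooth: "\<And>\<mu> \<nu>. Cinf_on U (ginv \<mu> \<nu>)"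
    and g_sym: "\<And>\<mu> \<nu> y. y \<in> U \<Longrightarrow> g \<mu> \<nu> y = g \<nu> \<mu> y"
    and ginv_right: "\<And>\<mu> \<gamma> y. y \<in> U \<Longrightarrow>
          (\<Sum>\<nu>\<in>UNIV. g \<mu> \<nu> y * ginv \<nu> \<gamma> y) = (if \<mu> = \<gamma> then 1 else 0)"
    and ginv_left: "\<And>\<mu> \<gamma> y. y \<in> U \<Longrightarrow>
          (\<Sum>\<nu>\<in>UNIV. ginv \<gamma> \<nu> y * g \<nu> \<mu> y) = (if \<mu> = \<gamma> then 1 else 0)"
    and metric_compat: "\<And>\<mu> \<nu> \<beta> y. y \<in> U \<Longrightarrow>
          pd \<beta> (g \<mu> \<nu>) y = Glow g \<Gamma> \<mu> \<beta> \<nu> y + Glow g \<Gamma> \<nu> \<beta> \<mu> y"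
    and \<omega>_antisym: "\<And>\<alpha> \<beta> y. y \<in> U \<Longrightarrow> \<omega> \<alpha> \<beta> y = - \<omega> \<beta> \<alpha> y"
  shows "(\<Sum>\<mu>\<in>UNIV. \<Sum>\<nu>\<in>UNIV. pbr \<omega> (g \<mu> \<nu>) (ginv \<mu> \<nu>) x) = 0"
    and "(\<Sum>\<mu>\<in>UNIV. \<Sum>\<nu>\<in>UNIV. \<Sum>\<gamma>\<in>UNIV.
           (\<Sum>\<alpha>\<in>UNIV. \<Sum>\<beta>\<in>UNIV. \<omega> \<alpha> \<beta> x * pd \<alpha> (g \<mu> \<nu>) x * \<Gamma> \<mu> \<beta> \<gamma> x) * ginv \<gamma> \<nu> x) = 0"
proof -
  define G P where "G = matrix_at g x" and "P = matrix_at ginv x"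
  define D \<Gamma>m where "D \<beta> = matrix_at (\<lambda>i j. pd \<beta> (g i j)) x"
    and "\<Gamma>m \<beta> = matrix_at (\<lambda>i j. \<Gamma> i \<beta> j) x" for \<beta>
  have G_sym: "transpose G = G"
    using g_sym[OF \<open>x \<in> U\<close>] by (simp add: G_def transpose_def vec_eq_iff)
  have GP: "matrix_at g y ** matrix_at ginv y = mat 1" if "y \<in> U" for y
    using ginv_right[OF that] by (simp add: matrix_at_mult_eq_mat_1)
  have PG: "P ** G = mat 1"
    using ginv_left[OF \<open>x \<in> U\<close>] by (simp add: P_def G_def matrix_at_mult_eq_mat_1)
  have P_sym: "transpose P = P"
    using transpose_right_inverse_symmetric[OF G_sym] GP[OF \<open>x \<in> U\<close>] by (simp add: G_def P_def)
  have D_compat: "D \<beta> = G ** \<Gamma>m \<beta> + transpose (G ** \<Gamma>m \<beta>)" for \<beta>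
    using metric_compat[OF \<open>x \<in> U\<close>]
    by (simp add: D_def G_def \<Gamma>m_def vec_eq_iff matrix_matrix_mult_def transpose_def Glow_def)
  have Dinv: "matrix_at (\<lambda>i j. pd \<beta> (ginv i j)) x = - (P ** D \<beta> ** P)" for \<beta>
    unfolding P_def D_def
    by (rule pd_matrix_inverse[OF \<open>open U\<close> \<open>x \<in> U\<close> Cinf_on_differentiable[OF g_smooth \<open>x \<in> U\<close>]
          Cinf_on_differentiable[OF ginv_smooth \<open>x \<in> U\<close>] GP PG[unfolded P_def G_def]])
  note vanish = trace_metric_pairings_vanish[OF \<omega>_antisym[OF \<open>x \<in> U\<close>] G_sym P_sym PG D_compat, where S=UNIV]
  have "(\<Sum>\<mu>\<in>UNIV. \<Sum>\<nu>\<in>UNIV. pbr \<omega> (g \<mu> \<nu>) (ginv \<mu> \<nu>) x)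
      = (\<Sum>\<alpha>\<in>UNIV. \<Sum>\<beta>\<in>UNIV. \<Sum>\<mu>\<in>UNIV. \<Sum>\<nu>\<in>UNIV. \<omega> \<alpha> \<beta> x * (D \<alpha> $ \<mu> $ \<nu> * matrix_at (\<lambda>i j. pd \<beta> (ginv i j)) x $ \<mu> $ \<nu>))"
    unfolding pbr_def D_def matrix_at_component by (subst sum_swap_pairs) (simp add: mult.assoc)
  also have "\<dots> = - (\<Sum>\<alpha>\<in>UNIV. \<Sum>\<beta>\<in>UNIV. \<omega> \<alpha> \<beta> x * trace (D \<alpha> ** transpose (P ** D \<beta> ** P)))"
    by (simp add: Dinv trace_mult_transpose sum_distrib_left sum_negf)
  finally show "(\<Sum>\<mu>\<in>UNIV. \<Sum>\<nu>\<in>UNIV. pbr \<omega> (g \<mu> \<nu>) (ginv \<mu> \<nu>) x) = 0"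
    using vanish(1) by simp
  have inner: "(\<Sum>\<gamma>\<in>UNIV. (\<Sum>\<alpha>\<in>UNIV. \<Sum>\<beta>\<in>UNIV. \<omega> \<alpha> \<beta> x * pd \<alpha> (g \<mu> \<nu>) x * \<Gamma> \<mu> \<beta> \<gamma> x) * ginv \<gamma> \<nu> x)
      = (\<Sum>\<alpha>\<in>UNIV. \<Sum>\<beta>\<in>UNIV. \<omega> \<alpha> \<beta> x * (D \<alpha> $ \<mu> $ \<nu> * (\<Gamma>m \<beta> ** P) $ \<mu> $ \<nu>))" for \<mu> \<nu>
    unfolding D_def \<Gamma>m_def P_def matrix_at_component matrix_matrix_mult_def vec_lambda_beta
    by (simp add: sum_distrib_left sum_distrib_right mult.assoc, subst sum.swap, rule sum.cong[OF refl],
        rule sum.swap)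
  have "(\<Sum>\<mu>\<in>UNIV. \<Sum>\<nu>\<in>UNIV. \<Sum>\<gamma>\<in>UNIV.
           (\<Sum>\<alpha>\<in>UNIV. \<Sum>\<beta>\<in>UNIV. \<omega> \<alpha> \<beta> x * pd \<alpha> (g \<mu> \<nu>) x * \<Gamma> \<mu> \<beta> \<gamma> x) * ginv \<gamma> \<nu> x)
      = (\<Sum>\<alpha>\<in>UNIV. \<Sum>\<beta>\<in>UNIV. \<Sum>\<mu>\<in>UNIV. \<Sum>\<nu>\<in>UNIV. \<omega> \<alpha> \<beta> x * (D \<alpha> $ \<mu> $ \<nu> * (\<Gamma>m \<beta> ** P) $ \<mu> $ \<nu>))"
    by (simp only: inner) (rule sum_swap_pairs)
  also have "\<dots> = (\<Sum>\<alpha>\<in>UNIV. \<Sum>\<beta>\<in>UNIV. \<omega> \<alpha> \<beta> x * trace (D \<alpha> ** transpose (\<Gamma>m \<beta> ** P)))"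
    by (simp add: trace_mult_transpose sum_distrib_left)
  finally show "(\<Sum>\<mu>\<in>UNIV. \<Sum>\<nu>\<in>UNIV. \<Sum>\<gamma>\<in>UNIV.
           (\<Sum>\<alpha>\<in>UNIV. \<Sum>\<beta>\<in>UNIV. \<omega> \<alpha> \<beta> x * pd \<alpha> (g \<mu> \<nu>) x * \<Gamma> \<mu> \<beta> \<gamma> x) * ginv \<gamma> \<nu> x) = 0"
    using vanish(2) by simp
qed

theorem proposition2p1:
  fixes U :: "(real^'n::finite) set"
    and g ginv \<omega> :: "'n \<Rightarrow> 'n \<Rightarrow> 'n fn"
    and \<Gamma> :: "'n \<Rightarrow> 'n \<Rightarrow> 'n \<Rightarrow> 'n fn"
    and gtinv :: "'n \<Rightarrow> 'n \<Rightarrow> 'n qf"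
    and B :: "'n form \<Rightarrow> 'n form \<Rightarrow> 'n qf"
  assumes U_open: "open U"
    and g_smooth: "\<And>\<mu> \<nu>. Cinf_on U (g \<mu> \<nu>)"
    and ginv_smooth: "\<And>\<mu> \<nu>. Cinf_on U (ginv \<mu> \<nu>)"
    and \<omega>_smooth: "\<And>\<alpha> \<beta>. Cinf_on U (\<omega> \<alpha> \<beta>)"
    and \<Gamma>_smooth: "\<And>\<alpha> \<beta> \<gamma>. Cinf_on U (\<Gamma> \<alpha> \<beta> \<gamma>)"
    and g_sym: "\<And>\<mu> \<nu> x. x \<in> U \<Longrightarrow> g \<mu> \<nu> x = g \<nu> \<mu> x"
    and ginv_right: "\<And>\<mu> \<gamma> x. x \<in> U \<Longrightarrow>
          (\<Sum>\<nu>\<in>UNIV. g \<mu> \<nu> x * ginv \<nu> \<gamma> x) = (if \<mu> = \<gamma> then 1 else 0)"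
    and ginv_left: "\<And>\<mu> \<gamma> x. x \<in> U \<Longrightarrow>
          (\<Sum>\<nu>\<in>UNIV. ginv \<gamma> \<nu> x * g \<nu> \<mu> x) = (if \<mu> = \<gamma> then 1 else 0)"
    and metric_compat: "\<And>\<mu> \<nu> \<beta> x. x \<in> U \<Longrightarrow>
          pd \<beta> (g \<mu> \<nu>) x = Glow g \<Gamma> \<mu> \<beta> \<nu> x + Glow g \<Gamma> \<nu> \<beta> \<mu> x"
    and \<omega>_antisym: "\<And>\<alpha> \<beta> x. x \<in> U \<Longrightarrow> \<omega> \<alpha> \<beta> x = - \<omega> \<beta> \<alpha> x"
    and jacobi: "\<And>f h k x. Cinf_on U f \<Longrightarrow> Cinf_on U h \<Longrightarrow> Cinf_on U k \<Longrightarrow> x \<in> U \<Longrightarrow>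
          pbr \<omega> f (pbr \<omega> h k) x + pbr \<omega> h (pbr \<omega> k f) x + pbr \<omega> k (pbr \<omega> f h) x = 0"
    and poisson_compat: "\<And>\<alpha> \<beta> \<gamma> x. x \<in> U \<Longrightarrow>
          pd \<gamma> (\<omega> \<alpha> \<beta>) x
          + (\<Sum>\<delta>\<in>UNIV. \<Gamma> \<alpha> \<gamma> \<delta> x * \<omega> \<delta> \<beta> x + \<Gamma> \<beta> \<gamma> \<delta> x * \<omega> \<alpha> \<delta> x)
          + (\<Sum>\<delta>\<in>UNIV. torsion \<Gamma> \<alpha> \<delta> \<gamma> x * \<omega> \<delta> \<beta> x + torsion \<Gamma> \<beta> \<delta> \<gamma> x * \<omega> \<alpha> \<delta> x) = 0"
    and gtinv_smooth: "\<And>\<mu> \<nu>. qsmooth U (gtinv \<mu> \<nu>)"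
    and gtinv_right: "\<And>\<mu> \<gamma>. qeqU U
          (qsum (\<lambda>\<nu>. qmult \<omega> (gt g \<omega> \<Gamma> \<mu> \<nu>) (gtinv \<nu> \<gamma>)) UNIV)
          ((\<lambda>x. if \<mu> = \<gamma> then 1 else 0), (\<lambda>x. 0))"
    and gtinv_left: "\<And>\<mu> \<gamma>. qeqU U
          (qsum (\<lambda>\<nu>. qmult \<omega> (gtinv \<gamma> \<nu>) (gt g \<omega> \<Gamma> \<nu> \<mu>)) UNIV)
          ((\<lambda>x. if \<mu> = \<gamma> then 1 else 0), (\<lambda>x. 0))"
    and B_add_left: "\<And>\<eta> \<eta>' \<zeta>. fsmooth U \<eta> \<Longrightarrow> fsmooth U \<eta>' \<Longrightarrow> fsmooth U \<zeta> \<Longrightarrow>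
          qeqU U (B (fadd \<eta> \<eta>') \<zeta>) (qadd (B \<eta> \<zeta>) (B \<eta>' \<zeta>))"
    and B_add_right: "\<And>\<eta> \<zeta> \<zeta>'. fsmooth U \<eta> \<Longrightarrow> fsmooth U \<zeta> \<Longrightarrow> fsmooth U \<zeta>' \<Longrightarrow>
          qeqU U (B \<eta> (fadd \<zeta> \<zeta>')) (qadd (B \<eta> \<zeta>) (B \<eta> \<zeta>'))"
    and B_balanced: "\<And>\<eta> f \<zeta>. fsmooth U \<eta> \<Longrightarrow> qsmooth U f \<Longrightarrow> fsmooth U \<zeta> \<Longrightarrow>
          qeqU U (B (qrmult \<omega> \<Gamma> \<eta> f) \<zeta>) (B \<eta> (qlmult \<omega> \<Gamma> f \<zeta>))"
    and B_bimodule: "\<And>f \<eta> \<zeta> k. qsmooth U f \<Longrightarrow> fsmooth U \<eta> \<Longrightarrow> fsmooth U \<zeta> \<Longrightarrow> qsmooth U k \<Longrightarrow>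
          qeqU U (B (qlmult \<omega> \<Gamma> f \<eta>) (qrmult \<omega> \<Gamma> \<zeta> k)) (qmult \<omega> (qmult \<omega> f (B \<eta> \<zeta>)) k)"
    and B_dx: "\<And>\<mu> \<nu>. qeqU U (B (dx \<mu>) (dx \<nu>)) (gtinv \<mu> \<nu>)"
  shows "qeqU U
          (qsum (\<lambda>\<mu>. qsum (\<lambda>\<nu>. B (qrmult \<omega> \<Gamma> (dx \<mu>) (gt g \<omega> \<Gamma> \<mu> \<nu>)) (dx \<nu>)) UNIV) UNIV)
          ((\<lambda>x. real CARD('n)),
           (\<lambda>x. 1/2 * (\<Sum>\<mu>\<in>UNIV. \<Sum>\<nu>\<in>UNIV. pbr \<omega> (g \<mu> \<nu>) (ginv \<mu> \<nu>) x)))"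
proof -
  have ginv_sym: "ginv \<mu> \<nu> x = ginv \<nu> \<mu> x" if "x \<in> U" for \<mu> \<nu> x
    using g_sym[OF that] ginv_right[OF that] by (rule ginv_symmetric_at)
  have fst_gtinv: "fst (gtinv \<mu> \<nu>) x = ginv \<mu> \<nu> x" if "x \<in> U" for \<mu> \<nu> x
    using ginv_left[OF that] gtinv_right that by (rule fst_gt_right_inverse_eq)
  have "qeqU U (qsum (\<lambda>\<mu>. qsum (\<lambda>\<nu>. qmult \<omega> (gt g \<omega> \<Gamma> \<mu> \<nu>) (gtinv \<mu> \<nu>)) UNIV) UNIV)
      ((\<lambda>x. real CARD('n)), (\<lambda>x. 0))"
  proof (rule qsum_qmult_right_inverse_trace[OF U_open _ _ gtinv_right])
    show "fst (gt g \<omega> \<Gamma> \<mu> \<nu>) x = fst (gt g \<omega> \<Gamma> \<nu> \<mu>) x" if "x \<in> U" for \<mu> \<nu> x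
      using g_sym[OF that] by simp
    show "fst (gtinv \<mu> \<nu>) x = fst (gtinv \<nu> \<mu>) x" if "x \<in> U" for \<mu> \<nu> x
      using ginv_sym[OF that] by (simp add: fst_gtinv[OF that])
  qed
  moreover have "qeqU U
      (qsum (\<lambda>\<mu>. qsum (\<lambda>\<nu>. B (qrmult \<omega> \<Gamma> (dx \<mu>) (gt g \<omega> \<Gamma> \<mu> \<nu>)) (dx \<nu>)) UNIV) UNIV)
      (qadd (qsum (\<lambda>\<mu>. qsum (\<lambda>\<nu>. qmult \<omega> (gt g \<omega> \<Gamma> \<mu> \<nu>) (gtinv \<mu> \<nu>)) UNIV) UNIV)
        ((\<lambda>x. 0), (\<lambda>x. \<Sum>\<mu>\<in>UNIV. \<Sum>\<nu>\<in>UNIV. \<Sum>\<gamma>\<in>UNIV.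
           (\<Sum>\<alpha>\<in>UNIV. \<Sum>\<beta>\<in>UNIV. \<omega> \<alpha> \<beta> x * pd \<alpha> (fst (gt g \<omega> \<Gamma> \<mu> \<nu>)) x * \<Gamma> \<mu> \<beta> \<gamma> x)
           * fst (gtinv \<gamma> \<nu>) x)))"
    by (intro qsum_B_qrmult_dx[OF B_add_left B_bimodule B_dx U_open \<omega>_smooth \<Gamma>_smooth]
        qsmooth_gt U_open g_smooth \<omega>_smooth \<Gamma>_smooth)
  moreover note vanish = metric_poisson_pairings_vanish[OF U_open _ g_smooth ginv_smooth g_sym ginv_right
      ginv_left metric_compat \<omega>_antisym]
  ultimately show ?thesis
    by (auto simp: qeqU_def qadd_def qsum_def fst_gtinv vanish(1) intro: vanish(2))
qed

end
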